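(* Let $(\mathcal{X},d)$ be a finite metric space, $P$ a probability distribution on $\mathcal{X}$, and $k\ge 1$ an integer. Let $O\in\mathcal{X}_k$ be an optimal solution of the $k$-RP instance, i.e., $O$ minimizes $\mathbb{E}_{X\sim P_k}[d_k(O,X)]$ over $\mathcal{X}_k$. If $S$ is a random $k$-multiset obtained by drawing $k$ points of $\mathcal{X}$ i.i.d. according to $P$ (i.e., $S\sim P_k$), then $$\mathbb{E}_{S\sim P_k}\mathbb{E}_{X\sim P_k}[d_k(S,X)]\le 2\cdot \mathbb{E}_{X\sim P_k}[d_k(O,X)].$$
   Context: $\mathcal{X}_k$ denotes the set of all multisets of exactly $k$ points of $\mathcal{X}$. For $U,V\in\mathcal{X}_k$, $d_k(U,V)$ is the minimum, over all perfect matchings between the $k$ elements of $U$ and the $k$ elements of $V$ (counted with multiplicity), of the sum of $d(u,v)$ over matched pairs $(u,v)$. $P_k$ is the distribution on $\mathcal{X}_k$ of the multiset of $k$ points drawn i.i.d. from $P$. The $k$-RP (robotaxi placement) problem asks for $S\in\mathcal{X}_k$ minimizing its cost $\mathbb{E}_{X\sim P_k}[d_k(S,X)]$. *)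

theory Defs
  imports "HOL-Analysis.Analysis" "HOL-Probability.Probability" "HOL-Library.Multiset"
begin

text \<open>Matching distance d_k between two multisets of the same size: minimum over
  all perfect matchings (realised as pairings of enumerations of the two multisets)
  of the sum of distances of matched pairs.\<close>
definition dk :: "'a::metric_space multiset \<Rightarrow> 'a multiset \<Rightarrow> real" where
  "dk U V = Min {sum_list (map (\<lambda>(u,v). dist u v) (zip us vs)) | us vs.
                   mset us = U \<and> mset vs = V}"

fun Pk :: "nat \<Rightarrow> 'a pmf \<Rightarrow> 'a multiset pmf" where
  "Pk 0 P = return_pmf {#}"
| "Pk (Suc k) P = bind_pmf P (\<lambda>x. map_pmf (add_mset x) (Pk k P))"

definition rp_cost :: "nat \<Rightarrow> 'a::metric_space pmf \<Rightarrow> 'a multiset \<Rightarrow> real" where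
  "rp_cost k P S = measure_pmf.expectation (Pk k P) (\<lambda>X. dk S X)"

end

theory Submission
  imports Defs "HOL-Combinatorics.Permutations"
begin

text \<open>First, the matching distance \<open>dk\<close> satisfies the triangle
  inequality: composing an optimal matching of \<open>U\<close> with \<open>M\<close> and one of \<open>M\<close> with \<open>X\<close>
  gives a matching of \<open>U\<close> with \<open>X\<close>, whose cost is bounded pointwise by the triangle
  inequality of \<open>d\<close>. Second, for any placement \<open>C\<close> of size \<open>k\<close>, averaging
  \<open>dk S X \<le> dk S C + dk C X\<close> over independent \<open>S, X \<sim> P\<^sub>k\<close> bounds the expected cost of
  a random placement by \<open>2 \<cdot> rp_cost k P C\<close>.\<close>

definition matching_cost :: "'a::metric_space list \<Rightarrow> 'a list \<Rightarrow> real" where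
  "matching_cost us vs = sum_list (map (\<lambda>(u,v). dist u v) (zip us vs))"

lemma dk_def_matching_cost:
  "dk U V = Min {matching_cost us vs | us vs. mset us = U \<and> mset vs = V}"
  unfolding dk_def matching_cost_def by simp

lemma finite_matching_costs:
  "finite {matching_cost us vs | us vs. mset us = U \<and> mset vs = V}"
proof -
  have "{matching_cost us vs | us vs. mset us = U \<and> mset vs = V}
        = (\<lambda>(us,vs). matching_cost us vs) ` ({us. mset us = U} \<times> {vs. mset vs = V})"
    by auto
  moreover have "finite {us. mset us = U}" for U :: "'a multiset"
    using mset_eq_finite ex_mset by metis
  ultimately show ?thesis by simp
qed

lemma matching_costs_nonempty:
  "{matching_cost us vs | us vs. mset us = U \<and> mset vs = V} \<noteq> {}"
  using ex_mset[of U] ex_mset[of V] by blast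

lemma dk_le_matching_cost: "mset us = U \<Longrightarrow> mset vs = V \<Longrightarrow> dk U V \<le> matching_cost us vs"
  unfolding dk_def_matching_cost by (rule Min_le[OF finite_matching_costs]) blast

lemma dk_attained:
  obtains us vs where "mset us = U" "mset vs = V" "dk U V = matching_cost us vs"
proof -
  have "dk U V \<in> {matching_cost us vs | us vs. mset us = U \<and> mset vs = V}"
    unfolding dk_def_matching_cost by (rule Min_in[OF finite_matching_costs matching_costs_nonempty])
  then show ?thesis using that by blast
qed

lemma matching_cost_commute: "matching_cost us vs = matching_cost vs us"
proof -
  have "map (\<lambda>(u,v). dist u v) (zip us vs) = map (\<lambda>(u,v). dist u v) (zip vs us)"
    by (subst zip_commute) (simp add: dist_commute case_prod_beta)
  then show ?thesis unfolding matching_cost_def by simp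
qed

lemma dk_commute: "dk U V = dk V U"
proof -
  have "{matching_cost us vs | us vs. mset us = U \<and> mset vs = V}
      = {matching_cost us vs | us vs. mset us = V \<and> mset vs = U}"
    using matching_cost_commute by blast
  then show ?thesis unfolding dk_def_matching_cost by simp
qed

lemma matching_cost_conv_sum:
  "length us = length vs \<Longrightarrow> matching_cost us vs = (\<Sum>i<length us. dist (us!i) (vs!i))"
  unfolding matching_cost_def by (simp add: sum_list_sum_nth atLeast0LessThan)

lemma matching_cost_permute_list:
  assumes "p permutes {..<length us}" "length us = length vs"
  shows "matching_cost (permute_list p us) (permute_list p vs) = matching_cost us vs"
proof -
  have "zip (permute_list p us) (permute_list p vs) = permute_list p (zip us vs)"
    using permute_list_zip[OF assms(1) refl] assms(2) by metis
  then have "mset (zip (permute_list p us) (permute_list p vs)) = mset (zip us vs)"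
    using assms by simp
  then show ?thesis
    unfolding matching_cost_def by (metis mset_map sum_mset_sum_list)
qed

lemma dk_triangle:
  assumes "size U = size M" "size M = size X"
  shows "dk U X \<le> dk U M + dk M X"
proof -
  obtain us ms where UM: "mset us = U" "mset ms = M" "dk U M = matching_cost us ms"
    by (rule dk_attained)
  obtain ms' xs where MX: "mset ms' = M" "mset xs = X" "dk M X = matching_cost ms' xs"
    by (rule dk_attained)
  have len: "length us = length ms" "length ms' = length ms" "length xs = length ms"
    using UM MX assms by (metis size_mset)+
  \<comment> \<open>align the second matching with the enumeration \<open>ms\<close> of \<open>M\<close> used by the first\<close>
  obtain p where p: "p permutes {..<length ms'}" "permute_list p ms' = ms"
    using mset_eq_permutation[of ms ms'] UM MX by metis
  define xs' where "xs' = permute_list p xs"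
  have xs': "mset xs' = X" "length xs' = length ms"
    using p MX len unfolding xs'_def by simp_all
  have MX': "matching_cost ms xs' = dk M X"
    using matching_cost_permute_list[OF p(1)] p(2) len MX(3) unfolding xs'_def by simp
  have "dk U X \<le> matching_cost us xs'"
    using dk_le_matching_cost UM xs' by blast
  also have "\<dots> = (\<Sum>i<length us. dist (us!i) (xs'!i))"
    using len xs' by (simp add: matching_cost_conv_sum)
  also have "\<dots> \<le> (\<Sum>i<length us. dist (us!i) (ms!i) + dist (ms!i) (xs'!i))"
    by (rule sum_mono) (rule dist_triangle)
  also have "\<dots> = matching_cost us ms + matching_cost ms xs'"
    using len xs' by (simp add: matching_cost_conv_sum sum.distrib)
  finally show ?thesis using UM MX' by simp
qed

lemma size_of_set_pmf_Pk: "S \<in> set_pmf (Pk k P) \<Longrightarrow> size S = k"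
  by (induction k arbitrary: S) auto

lemma finite_set_pmf_Pk: "finite (set_pmf P) \<Longrightarrow> finite (set_pmf (Pk k P))"
  by (induction k) auto

lemma integrable_Pk:
  fixes f :: "'a multiset \<Rightarrow> real"
  shows "finite (set_pmf P) \<Longrightarrow> integrable (measure_pmf (Pk k P)) f"
  by (rule integrable_measure_pmf_finite[OF finite_set_pmf_Pk])

lemma rp_cost_le_dk_plus_rp_cost:
  assumes "finite (set_pmf P)" "size S = k" "size C = k"
  shows "rp_cost k P S \<le> dk S C + rp_cost k P C"
proof -
  note int = integrable_Pk[OF assms(1)]
  have "rp_cost k P S \<le> measure_pmf.expectation (Pk k P) (\<lambda>X. dk S C + dk C X)"
    unfolding rp_cost_def
  proof (rule integral_mono_AE[OF int int], rule AE_pmfI)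
    fix X assume "X \<in> set_pmf (Pk k P)"
    then show "dk S X \<le> dk S C + dk C X"
      using dk_triangle size_of_set_pmf_Pk assms(2,3) by metis
  qed
  also have "\<dots> = dk S C + rp_cost k P C"
    unfolding rp_cost_def by (simp add: int)
  finally show ?thesis .
qed

lemma expected_rp_cost_le_twice:
  assumes "finite (set_pmf P)" "size C = k"
  shows "measure_pmf.expectation (Pk k P) (rp_cost k P) \<le> 2 * rp_cost k P C"
proof -
  note int = integrable_Pk[OF assms(1)]
  have "measure_pmf.expectation (Pk k P) (rp_cost k P)
        \<le> measure_pmf.expectation (Pk k P) (\<lambda>S. dk C S + rp_cost k P C)"
  proof (rule integral_mono_AE[OF int int], rule AE_pmfI)
    fix S assume "S \<in> set_pmf (Pk k P)"
    then show "rp_cost k P S \<le> dk C S + rp_cost k P C"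
      using rp_cost_le_dk_plus_rp_cost[OF assms(1) _ assms(2)] size_of_set_pmf_Pk dk_commute
      by metis
  qed
  also have "\<dots> = 2 * rp_cost k P C"
    by (simp add: int rp_cost_def)
  finally show ?thesis .
qed

theorem theorem1:
  fixes P :: "'a::{metric_space, finite} pmf" and k :: nat and Opt :: "'a multiset"
  assumes "k \<ge> 1"
    and "size Opt = k"
    and "\<forall>S. size S = k \<longrightarrow> rp_cost k P Opt \<le> rp_cost k P S"
  shows "measure_pmf.expectation (Pk k P) (\<lambda>S. rp_cost k P S) \<le> 2 * rp_cost k P Opt"
  using expected_rp_cost_le_twice[OF _ assms(2)] by simp

end
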